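(* Consider the approximate first-stage problem described in the context. If it has an optimal solution, then there always exists an optimal solution in which, for every $(i,t)$, the pair $(y_i^{+,t},y_i^{-,t})$ has the form $(y_i^{+,t},0)$ or $(0,y_i^{-,t})$.
   Context: Data: a directed graph $\mathcal{G}_\text{RV}=(\mathcal{N}_\text{RV},\mathcal{E}_\text{RV})$ of one-step rebalancing-vehicle (RV) movements, a set $\mathcal{N}_\text{SV}$ of stations, a finite set $\mathcal{V}$ of RVs each with integer capacity $\overline{b}$, horizon $T$, integer bound $\overline{y}$, costs $c_{i,j}^t\in\mathbb{R}$, $r_i^t\ge0$. A parameter vector $\theta=(\theta_0,(\theta_i^t)_{i,t})$ with $\theta_0\in\mathbb{R}$ and $\theta_i^t=([\theta_i^t]_{-\overline{y}},\dots,[\theta_i^t]_{\overline{y}-1})\in\mathbb{R}^{2\overline{y}}$ defines $\overline{V}_i^t(\cdot;\theta_i^t):[-\overline{y},\overline{y}]\to\mathbb{R}$ as the continuous piecewise linear function with $\overline{V}_i^t(0)=0$ whose slope on $[m,m+1]$ is $[\theta_i^t]_m$ for $m=-\overline{y},\dots,\overline{y}-1$, and $\overline{V}(y;\theta)=\theta_0+\sum_{t=1}^T\sum_{i\in\mathcal{N}_\text{SV}\cap\mathcal{N}_\text{RV}}\overline{V}_i^t(y_i^{-,t}-y_i^{+,t};\theta_i^t)$. The approximate first-stage problem is $$\min_{z,y,b}\ \sum_{t=1}^T\Big[\sum_{(i,j)\in\mathcal{E}_\text{RV}}c_{i,j}^tz_{i,j}^t+\sum_{i\in\mathcal{N}_\text{SV}\cap\mathcal{N}_\text{RV}}r_i^t(y_i^{+,t}+y_i^{-,t})\Big]+\overline{V}(y;\theta)$$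 subject to: $\sum_{(i,j)\in\mathcal{E}_\text{RV}}b_{i,j}^t=\sum_{(j,i)\in\mathcal{E}_\text{RV}}b_{j,i}^{t-1}+y_i^{+,t}-y_i^{-,t}$ and $\sum_{(i,j)\in\mathcal{E}_\text{RV}}z_{i,j}^t=\sum_{(j,i)\in\mathcal{E}_\text{RV}}z_{j,i}^{t-1}$ for $t=1,\dots,T$, $i\in\mathcal{N}_\text{RV}$; $0\le b_{i,j}^t\le\overline{b}z_{i,j}^t$ for $t=0,\dots,T$ with integers $b_{i,j}^0$ given; $0\le y_i^{+,t}\le\overline{y}$, $0\le y_i^{-,t}\le\overline{y}$; integers $z_{i,j}^0$ given with $\sum_{i,j}z_{i,j}^0=|\mathcal{V}|$; all $y,b,z$ integer-valued. (Variables $y_i^{\pm,t}$ are taken to be $0$ where not defined.) *)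

theory Defs
  imports Complex_Main
begin

text \<open>Continuous piecewise linear function on [-ybar, ybar] with value 0 at 0 and
  slope th m on [m, m+1] for m = -ybar, ..., ybar-1, written out in closed form:
  V(x) = sum_m th m * (g_m(x) - g_m(0)) with g_m(x) = max 0 (min 1 (x - m)).\<close>
definition pl_fun :: "nat \<Rightarrow> (int \<Rightarrow> real) \<Rightarrow> real \<Rightarrow> real" where
  "pl_fun ybar th x =
     (\<Sum>m\<in>{- int ybar..<int ybar}.
        th m * (max 0 (min 1 (x - of_int m)) - max 0 (min 1 (0 - of_int m))))"

definition Vbar ::
  "'n set \<Rightarrow> 'n set \<Rightarrow> nat \<Rightarrow> nat \<Rightarrow> real \<Rightarrow> (nat \<Rightarrow> 'n \<Rightarrow> int \<Rightarrow> real)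
   \<Rightarrow> (nat \<Rightarrow> 'n \<Rightarrow> int) \<Rightarrow> (nat \<Rightarrow> 'n \<Rightarrow> int) \<Rightarrow> real" where
  "Vbar NSV NRV T ybar theta0 theta yp ym =
     theta0 + (\<Sum>t\<in>{1..T}. \<Sum>i\<in>NSV \<inter> NRV.
                 pl_fun ybar (theta t i) (of_int (ym t i - yp t i)))"

definition objective ::
  "('n \<times> 'n) set \<Rightarrow> 'n set \<Rightarrow> 'n set \<Rightarrow> nat \<Rightarrow> nat
   \<Rightarrow> (nat \<Rightarrow> 'n \<Rightarrow> 'n \<Rightarrow> real) \<Rightarrow> (nat \<Rightarrow> 'n \<Rightarrow> real)
   \<Rightarrow> real \<Rightarrow> (nat \<Rightarrow> 'n \<Rightarrow> int \<Rightarrow> real)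
   \<Rightarrow> (nat \<Rightarrow> 'n \<Rightarrow> 'n \<Rightarrow> int) \<Rightarrow> (nat \<Rightarrow> 'n \<Rightarrow> int) \<Rightarrow> (nat \<Rightarrow> 'n \<Rightarrow> int) \<Rightarrow> real" where
  "objective E NSV NRV T ybar c r theta0 theta z yp ym =
     (\<Sum>t\<in>{1..T}. (\<Sum>(i,j)\<in>E. c t i j * of_int (z t i j))
                  + (\<Sum>i\<in>NSV \<inter> NRV. r t i * of_int (yp t i + ym t i)))
     + Vbar NSV NRV T ybar theta0 theta yp ym"

text \<open>Feasible set. Integrality is built into the types (int). The y-variables are
  defined only for t in {1..T} and i in NSV cap NRV and are required to be 0 elsewhere.\<close>
definition feasible ::
  "('n \<times> 'n) set \<Rightarrow> 'n set \<Rightarrow> 'n set \<Rightarrow> nat \<Rightarrow> nat \<Rightarrow> nat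
   \<Rightarrow> ('n \<Rightarrow> 'n \<Rightarrow> int) \<Rightarrow> ('n \<Rightarrow> 'n \<Rightarrow> int)
   \<Rightarrow> (nat \<Rightarrow> 'n \<Rightarrow> 'n \<Rightarrow> int) \<Rightarrow> (nat \<Rightarrow> 'n \<Rightarrow> 'n \<Rightarrow> int)
   \<Rightarrow> (nat \<Rightarrow> 'n \<Rightarrow> int) \<Rightarrow> (nat \<Rightarrow> 'n \<Rightarrow> int) \<Rightarrow> bool" where
  "feasible E NSV NRV T ybar bbar z0 b0 z b yp ym \<longleftrightarrow>
     (\<forall>t\<in>{1..T}. \<forall>i\<in>NRV.
        (\<Sum>j | (i,j) \<in> E. b t i j) = (\<Sum>j | (j,i) \<in> E. b (t-1) j i) + yp t i - ym t i) \<and>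
     (\<forall>t\<in>{1..T}. \<forall>i\<in>NRV.
        (\<Sum>j | (i,j) \<in> E. z t i j) = (\<Sum>j | (j,i) \<in> E. z (t-1) j i)) \<and>
     (\<forall>t\<in>{0..T}. \<forall>(i,j)\<in>E. 0 \<le> b t i j \<and> b t i j \<le> int bbar * z t i j) \<and>
     (\<forall>(i,j)\<in>E. b 0 i j = b0 i j \<and> z 0 i j = z0 i j) \<and>
     (\<forall>t\<in>{1..T}. \<forall>i\<in>NSV \<inter> NRV.
        0 \<le> yp t i \<and> yp t i \<le> int ybar \<and> 0 \<le> ym t i \<and> ym t i \<le> int ybar) \<and>
     (\<forall>t i. t \<notin> {1..T} \<or> i \<notin> NSV \<inter> NRV \<longrightarrow> yp t i = 0 \<and> ym t i = 0)"

definition optimal ::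
  "('n \<times> 'n) set \<Rightarrow> 'n set \<Rightarrow> 'n set \<Rightarrow> nat \<Rightarrow> nat \<Rightarrow> nat
   \<Rightarrow> ('n \<Rightarrow> 'n \<Rightarrow> int) \<Rightarrow> ('n \<Rightarrow> 'n \<Rightarrow> int)
   \<Rightarrow> (nat \<Rightarrow> 'n \<Rightarrow> 'n \<Rightarrow> real) \<Rightarrow> (nat \<Rightarrow> 'n \<Rightarrow> real)
   \<Rightarrow> real \<Rightarrow> (nat \<Rightarrow> 'n \<Rightarrow> int \<Rightarrow> real)
   \<Rightarrow> (nat \<Rightarrow> 'n \<Rightarrow> 'n \<Rightarrow> int) \<Rightarrow> (nat \<Rightarrow> 'n \<Rightarrow> 'n \<Rightarrow> int)
   \<Rightarrow> (nat \<Rightarrow> 'n \<Rightarrow> int) \<Rightarrow> (nat \<Rightarrow> 'n \<Rightarrow> int) \<Rightarrow> bool" where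
  "optimal E NSV NRV T ybar bbar z0 b0 c r theta0 theta z b yp ym \<longleftrightarrow>
     feasible E NSV NRV T ybar bbar z0 b0 z b yp ym \<and>
     (\<forall>z' b' yp' ym'. feasible E NSV NRV T ybar bbar z0 b0 z' b' yp' ym' \<longrightarrow>
        objective E NSV NRV T ybar c r theta0 theta z yp ym
          \<le> objective E NSV NRV T ybar c r theta0 theta z' yp' ym')"

end

theory Submission
  imports Defs
begin

text \<open>Subtracting \<open>min y\<^sup>+ y\<^sup>-\<close> from both \<open>y\<^sup>+\<close> and \<open>y\<^sup>-\<close> leaves the net
  transfer \<open>y\<^sup>+ - y\<^sup>-\<close> unchanged, and the constraints and the value function \<open>Vbar\<close> see the
  \<open>y\<close>-variables only through this difference. The bounds survive because the new values
  lie between \<open>0\<close> and the old ones, and the handling cost \<open>r (y\<^sup>+ + y\<^sup>-)\<close> can only drop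
  since \<open>r \<ge> 0\<close>.\<close>

definition strip_common :: "(nat \<Rightarrow> 'n \<Rightarrow> int) \<Rightarrow> (nat \<Rightarrow> 'n \<Rightarrow> int) \<Rightarrow> nat \<Rightarrow> 'n \<Rightarrow> int" where
  "strip_common y y' t i = y t i - min (y t i) (y' t i)"

lemma strip_common_diff:
  "strip_common y y' t i - strip_common y' y t i = y t i - y' t i"
  by (simp add: strip_common_def min.commute)

lemma strip_common_eq_0_or:
  "strip_common y y' t i = 0 \<or> strip_common y' y t i = 0"
  by (simp add: strip_common_def min_def)

lemma strip_common_bounds:
  assumes "0 \<le> y t i" "0 \<le> y' t i"
  shows "0 \<le> strip_common y y' t i" "strip_common y y' t i \<le> y t i"
  using assms by (auto simp: strip_common_def min_def)

lemma Vbar_cong_diff: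
  assumes "\<And>t i. ym' t i - yp' t i = ym t i - yp t i"
  shows "Vbar NSV NRV T ybar theta0 theta yp' ym' = Vbar NSV NRV T ybar theta0 theta yp ym"
  unfolding Vbar_def assms ..

lemma feasible_strip_common:
  assumes feas: "feasible E NSV NRV T ybar bbar z0 b0 z b yp ym"
  shows "feasible E NSV NRV T ybar bbar z0 b0 z b (strip_common yp ym) (strip_common ym yp)"
proof -
  have net: "x + strip_common yp ym t i - strip_common ym yp t i = x + yp t i - ym t i"
    for x t i using strip_common_diff[of yp ym t i] by linarith
  have "0 \<le> strip_common yp ym t i \<and> strip_common yp ym t i \<le> int ybar \<and>
        0 \<le> strip_common ym yp t i \<and> strip_common ym yp t i \<le> int ybar"
    if "t \<in> {1..T}" "i \<in> NSV \<inter> NRV" for t i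
  proof -
    from feas that have "0 \<le> yp t i" "yp t i \<le> int ybar" "0 \<le> ym t i" "ym t i \<le> int ybar"
      unfolding feasible_def by blast+
    with strip_common_bounds[of yp t i ym] strip_common_bounds[of ym t i yp] show ?thesis
      by linarith
  qed
  moreover have "strip_common yp ym t i = 0 \<and> strip_common ym yp t i = 0"
    if "t \<notin> {1..T} \<or> i \<notin> NSV \<inter> NRV" for t i
    using feas that unfolding feasible_def strip_common_def by auto
  ultimately show ?thesis
    using feas unfolding feasible_def net by blast
qed

lemma objective_strip_common_le:
  assumes r_nonneg: "\<And>t i. 0 \<le> r t i"
    and feas: "feasible E NSV NRV T ybar bbar z0 b0 z b yp ym"
  shows "objective E NSV NRV T ybar c r theta0 theta z (strip_common yp ym) (strip_common ym yp)
         \<le> objective E NSV NRV T ybar c r theta0 theta z yp ym"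
proof -
  have handling_le:
    "r t i * of_int (strip_common yp ym t i + strip_common ym yp t i)
     \<le> r t i * of_int (yp t i + ym t i)"
    if "t \<in> {1..T}" "i \<in> NSV \<inter> NRV" for t i
  proof -
    from feas that have "0 \<le> yp t i" "0 \<le> ym t i"
      unfolding feasible_def by blast+
    with strip_common_bounds[of yp t i ym] strip_common_bounds[of ym t i yp]
    have "strip_common yp ym t i + strip_common ym yp t i \<le> yp t i + ym t i"
      by linarith
    then show ?thesis
      using r_nonneg by (intro mult_left_mono) simp_all
  qed
  have Vbar_eq: "Vbar NSV NRV T ybar theta0 theta (strip_common yp ym) (strip_common ym yp)
        = Vbar NSV NRV T ybar theta0 theta yp ym"
    by (rule Vbar_cong_diff) (rule strip_common_diff)
  have handling_sum_le:
    "(\<Sum>i\<in>NSV \<inter> NRV. r t i * of_int (strip_common yp ym t i + strip_common ym yp t i))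
     \<le> (\<Sum>i\<in>NSV \<inter> NRV. r t i * of_int (yp t i + ym t i))" if "t \<in> {1..T}" for t
    using handling_le that by (intro sum_mono)
  show ?thesis
    unfolding objective_def Vbar_eq
    by (intro add_right_mono sum_mono add_left_mono handling_sum_le)
qed

lemma optimal_strip_common:
  assumes r_nonneg: "\<And>t i. 0 \<le> r t i"
    and opt: "optimal E NSV NRV T ybar bbar z0 b0 c r theta0 theta z b yp ym"
  shows "optimal E NSV NRV T ybar bbar z0 b0 c r theta0 theta z b
           (strip_common yp ym) (strip_common ym yp)"
proof -
  have feas: "feasible E NSV NRV T ybar bbar z0 b0 z b yp ym"
    using opt unfolding optimal_def by blast
  show ?thesis
    using opt feasible_strip_common[OF feas] objective_strip_common_le[OF r_nonneg feas]
    unfolding optimal_def by (meson order_trans)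
qed

theorem lemma3:
  fixes E :: "('n \<times> 'n) set" and NRV NSV :: "'n set" and V :: "'v set"
    and T ybar bbar :: nat
    and c :: "nat \<Rightarrow> 'n \<Rightarrow> 'n \<Rightarrow> real" and r :: "nat \<Rightarrow> 'n \<Rightarrow> real"
    and theta0 :: real and theta :: "nat \<Rightarrow> 'n \<Rightarrow> int \<Rightarrow> real"
    and z0 b0 :: "'n \<Rightarrow> 'n \<Rightarrow> int"
  assumes "finite NRV" and "E \<subseteq> NRV \<times> NRV" and "finite V"
    and "\<forall>t i. 0 \<le> r t i"
    and "(\<Sum>(i,j)\<in>E. z0 i j) = int (card V)"
    and "\<exists>z b yp ym. optimal E NSV NRV T ybar bbar z0 b0 c r theta0 theta z b yp ym"
  shows "\<exists>z b yp ym. optimal E NSV NRV T ybar bbar z0 b0 c r theta0 theta z b yp ym \<and>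
           (\<forall>t i. yp t i = 0 \<or> ym t i = 0)"
proof -
  from assms(6) obtain z b yp ym
    where "optimal E NSV NRV T ybar bbar z0 b0 c r theta0 theta z b yp ym"
    by blast
  then have "optimal E NSV NRV T ybar bbar z0 b0 c r theta0 theta z b
               (strip_common yp ym) (strip_common ym yp)"
    using assms(4) by (intro optimal_strip_common) auto
  then show ?thesis
    using strip_common_eq_0_or by (intro exI conjI allI)
qed

end
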